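(* Let $n\ge1$, $0<p_{\mathrm{tot}}\le1$, and let $Y$ be a discrete random variable. Let $$\mathcal Z=\Big\{\max\big(\{Y\}\cup\{X_i\}_{i=1}^n\big)\ \Big|\ X_i\sim\mathrm{geom}(p_i),\ 0<p_i\le1,\ \prod_{i=1}^n p_i=p_{\mathrm{tot}}\Big\},$$ where $Y,X_1,\dots,X_n$ are mutually independent. Let $Z_{\mathrm{hom}}\in\mathcal Z$ be the member with $p_1=\dots=p_n$, i.e. $Z_{\mathrm{hom}}=\max(\{Y\}\cup\{X_{\mathrm{hom},i}\}_{i=1}^n)$ with $X_{\mathrm{hom},i}\sim\mathrm{geom}(\sqrt[n]{p_{\mathrm{tot}}})$. Then for every $Z\in\mathcal Z$, $Z\ge_{\mathrm{st}}Z_{\mathrm{hom}}$.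
   Context: $\mathrm{geom}(p)$ denotes the geometric distribution on $\{1,2,3,\dots\}$ with success probability $p$, so $\Pr(X\le k)=1-(1-p)^k$. For random variables $A,B$, $A\ge_{\mathrm{st}}B$ means $\Pr(A>z)\ge\Pr(B>z)$ for all real $z$. *)

theory Defs
  imports "HOL-Probability.Probability"
begin

text \<open>geom(p) on {1,2,3,...}: number of trials up to and including the first success.
  The library's geometric_pmf counts failures (support {0,1,...}), so we shift by one.\<close>
definition geom_pmf :: "real \<Rightarrow> nat pmf" where
  "geom_pmf p = map_pmf Suc (geometric_pmf p)"

text \<open>Independence is encoded by sequential (product) binding of the distributions.\<close>
fun max_geom_dist :: "real pmf \<Rightarrow> real list \<Rightarrow> real pmf" where
  "max_geom_dist DY [] = DY"
| "max_geom_dist DY (p # ps) =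
     bind_pmf (max_geom_dist DY ps) (\<lambda>z. bind_pmf (geom_pmf p) (\<lambda>x. return_pmf (max z (real x))))"

definition stoch_ge :: "real pmf \<Rightarrow> real pmf \<Rightarrow> bool" where
  "stoch_ge A B \<longleftrightarrow> (\<forall>z::real. measure_pmf.prob A {w. w > z} \<ge> measure_pmf.prob B {w. w > z})"

end

theory Submission
  imports Defs
begin

(* Both distributions satisfy P(Z <= z) = P(Y <= z) * prod_i (1 - (1 - p_i)^k) with
   k = floor z, so it suffices to show that the product is largest when all p_i coincide.
   Writing p_i = exp t_i, the constraint prod_i p_i = p_tot fixes the mean of the t_i, and
   t |-> -ln (1 - (1 - exp t)^k) is convex on t <= 0, so Jensen's inequality concludes. *)

lemma power_mult_power_le:
  fixes a b :: real
  assumes "0 \<le> b" "b \<le> a" "j \<le> m"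
  shows "b^m * a^j \<le> a^m * b^j"
proof -
  have "b^m * a^j = b^j * (b^(m-j) * a^j)"
    using assms by (simp add: power_add[symmetric] mult_ac)
  also have "\<dots> \<le> b^j * (a^(m-j) * a^j)"
    using assms by (intro mult_left_mono mult_right_mono power_mono) auto
  also have "\<dots> = a^m * b^j"
    using assms by (simp add: power_add[symmetric] mult_ac)
  finally show ?thesis .
qed

lemma power_div_geometric_sum_mono:
  fixes a b :: real
  assumes "0 \<le> b" "b \<le> a"
  shows "b^m / (\<Sum>i\<le>m. b^i) \<le> a^m / (\<Sum>i\<le>m. a^i)"
proof -
  have geometric_sum_ge_1: "(\<Sum>i\<le>m. x^i) \<ge> 1" if "0 \<le> x" for x :: real
    using sum_mono2[of "{..m}" "{0}" "\<lambda>i. x^i"] that by simp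
  have "b^m * (\<Sum>i\<le>m. a^i) \<le> a^m * (\<Sum>i\<le>m. b^i)"
    unfolding sum_distrib_left using assms by (intro sum_mono power_mult_power_le) auto
  then show ?thesis
    using assms geometric_sum_ge_1[of a] geometric_sum_ge_1[of b]
    by (simp add: divide_simps mult_ac)
qed

lemma convex_on_neg_ln_geom_cdf_exp:
  "convex_on {..0::real} (\<lambda>t. - ln (1 - (1 - exp t)^Suc m))"
proof (rule convex_on_realI[where
      f' = "\<lambda>t. - (Suc m * (1 - exp t)^m * exp t) / (1 - (1 - exp t)^Suc m)"])
  fix t :: real assume "t \<in> {..0}"
  then have "(1 - exp t)^Suc m < 1"
    using power_less_one_iff[of "1 - exp t" "Suc m"] by auto
  then show "((\<lambda>t. - ln (1 - (1 - exp t)^Suc m)) has_real_derivative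
      - (Suc m * (1 - exp t)^m * exp t) / (1 - (1 - exp t)^Suc m)) (at t)"
    by (auto intro!: derivative_eq_intros simp del: power_Suc)
next
  (* With a = 1 - exp t the derivative is -(m+1) a^m / (1 + a + ... + a^m), which
     decreases in a and hence increases in t. *)
  fix x y :: real assume xy: "x \<in> {..0}" "y \<in> {..0}" "x \<le> y"
  define a b where "a = 1 - exp x" and "b = 1 - exp y"
  have ab: "0 \<le> b" "b \<le> a" "a < 1"
    using xy by (auto simp: a_def b_def)
  have closed_form: "c^m * (1 - c) / (1 - c^Suc m) = c^m / (\<Sum>i\<le>m. c^i)" if "c < 1" for c :: real
    using that by (subst sum_gp_basic[symmetric]) simp
  have "b^m * (1 - b) / (1 - b^Suc m) \<le> a^m * (1 - a) / (1 - a^Suc m)"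
    using ab power_div_geometric_sum_mono[OF ab(1,2), of m] closed_form[of a] closed_form[of b]
    by (simp del: power_Suc)
  then have "Suc m * (b^m * (1 - b) / (1 - b^Suc m)) \<le> Suc m * (a^m * (1 - a) / (1 - a^Suc m))"
    by (intro mult_left_mono) auto
  moreover have "exp x = 1 - a" "exp y = 1 - b"
    by (auto simp: a_def b_def)
  ultimately show "- (Suc m * (1 - exp x)^m * exp x) / (1 - (1 - exp x)^Suc m)
      \<le> - (Suc m * (1 - exp y)^m * exp y) / (1 - (1 - exp y)^Suc m)"
    by (simp add: a_def[symmetric] b_def[symmetric] mult_ac)
qed simp

lemma prod_le_power_if_convex_on_neg_ln_exp:
  fixes F :: "real \<Rightarrow> real" and p :: "'a \<Rightarrow> real"
  assumes convex: "convex_on {..0} (\<lambda>t. - ln (F (exp t)))"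
    and F_pos: "\<And>x. 0 < x \<Longrightarrow> x \<le> 1 \<Longrightarrow> 0 < F x"
    and I: "finite I" "I \<noteq> {}"
    and p: "\<And>i. i \<in> I \<Longrightarrow> 0 < p i \<and> p i \<le> 1"
    and q: "0 < q" "(\<Prod>i\<in>I. p i) = q ^ card I"
  shows "(\<Prod>i\<in>I. F (p i)) \<le> F q ^ card I"
proof -
  have card: "card I > 0"
    using I by (simp add: card_gt_0_iff)
  have "q ^ card I \<le> 1"
    unfolding q(2)[symmetric] using p by (intro prod_le_1) (auto simp: less_imp_le)
  then have "q \<le> 1"
    using q(1) card by (simp add: power_le_one_iff)
  have "(\<Sum>i\<in>I. ln (p i)) = ln (\<Prod>i\<in>I. p i)"
    using p by (subst ln_prod[OF I(1)]) force+
  also have "\<dots> = card I * ln q"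
    using q by (simp add: ln_realpow)
  finally have mean: "(\<Sum>i\<in>I. (1 / card I) *\<^sub>R ln (p i)) = ln q"
    using card by (simp flip: sum_divide_distrib)
  have "- ln (F q) \<le> (\<Sum>i\<in>I. (1 / card I) * - ln (F (p i)))"
    using convex_on_sum[OF I convex, of "\<lambda>_. 1 / card I" "\<lambda>i. ln (p i)"] mean p q(1) I
    by simp
  then have "(\<Sum>i\<in>I. ln (F (p i))) \<le> card I * ln (F q)"
    using card by (simp add: sum_negf pos_divide_le_eq mult.commute flip: sum_divide_distrib)
  moreover have "ln (\<Prod>i\<in>I. F (p i)) = (\<Sum>i\<in>I. ln (F (p i)))"
    using p F_pos by (subst ln_prod[OF I(1)]) (force simp: less_imp_neq[symmetric])+
  ultimately have "ln (\<Prod>i\<in>I. F (p i)) \<le> ln (F q ^ card I)"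
    using F_pos q(1) \<open>q \<le> 1\<close> by (simp add: ln_realpow)
  then show ?thesis
    using p F_pos q(1) \<open>q \<le> 1\<close> by (simp add: prod_pos)
qed

lemma prod_geom_cdf_le_homogeneous:
  fixes p :: "'a \<Rightarrow> real"
  assumes "finite I" "I \<noteq> {}" "\<And>i. i \<in> I \<Longrightarrow> 0 < p i \<and> p i \<le> 1"
    and "0 < q" "(\<Prod>i\<in>I. p i) = q ^ card I"
  shows "(\<Prod>i\<in>I. 1 - (1 - p i)^k) \<le> (1 - (1 - q)^k) ^ card I"
proof (cases k)
  case 0
  then show ?thesis
    using assms(1,2) by simp
next
  case (Suc m)
  have "0 < 1 - (1 - x)^Suc m" if "0 < x" "x \<le> 1" for x :: real
    using that power_less_one_iff[of "1 - x" "Suc m"] by auto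
  then show ?thesis
    unfolding Suc using convex_on_neg_ln_geom_cdf_exp[of m] assms
    by (intro prod_le_power_if_convex_on_neg_ln_exp) auto
qed

lemma prob_geom_pmf_le:
  assumes "0 < p" "p \<le> 1"
  shows "measure_pmf.prob (geom_pmf p) {x. real x \<le> z} = 1 - (1 - p)^(nat \<lfloor>z\<rfloor>)"
proof -
  have "Suc -` {x. real x \<le> z} = {..<nat \<lfloor>z\<rfloor>}"
  proof (intro set_eqI)
    fix n
    have "real (Suc n) \<le> z \<longleftrightarrow> int (Suc n) \<le> \<lfloor>z\<rfloor>"
      by (simp only: le_floor_iff of_int_of_nat_eq)
    then show "n \<in> Suc -` {x. real x \<le> z} \<longleftrightarrow> n \<in> {..<nat \<lfloor>z\<rfloor>}"
      by (simp only: vimage_eq mem_Collect_eq lessThan_iff) linarith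
  qed
  then have "measure_pmf.prob (geom_pmf p) {x. real x \<le> z} = (\<Sum>n<nat \<lfloor>z\<rfloor>. (1 - p)^n * p)"
    unfolding geom_pmf_def measure_map_pmf using assms by (simp add: measure_measure_pmf_finite)
  also have "\<dots> = 1 - (1 - p)^(nat \<lfloor>z\<rfloor>)"
    using one_diff_power_eq[of "1 - p" "nat \<lfloor>z\<rfloor>"] by (simp add: sum_distrib_left mult_ac)
  finally show ?thesis .
qed

lemma measure_pmf_prob_pair_times:
  "measure_pmf.prob (pair_pmf M N) (A \<times> B) = measure_pmf.prob M A * measure_pmf.prob N B"
proof -
  have "measure_pmf.prob (pair_pmf M N) (A \<times> B)
      = measure_pmf.prob (pair_pmf M N) ((A \<inter> set_pmf M) \<times> (B \<inter> set_pmf N))"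
    by (subst measure_Int_set_pmf[symmetric]) (simp add: Times_Int_Times)
  also have "\<dots> = measure_pmf.prob M (A \<inter> set_pmf M) * measure_pmf.prob N (B \<inter> set_pmf N)"
    by (intro measure_pmf_prob_product countable_Int2 countable_set_pmf)
  finally show ?thesis
    by (simp add: measure_Int_set_pmf)
qed

lemma max_geom_dist_Cons:
  "max_geom_dist DY (p # ps) =
    map_pmf (\<lambda>(z, x). max z (real x)) (pair_pmf (max_geom_dist DY ps) (geom_pmf p))"
  by (simp add: pair_pmf_def map_pmf_def bind_assoc_pmf bind_return_pmf)

lemma prob_max_geom_dist_le:
  assumes "\<forall>p\<in>set ps. 0 < p \<and> p \<le> 1"
  shows "measure_pmf.prob (max_geom_dist DY ps) {w. w \<le> z}
    = measure_pmf.prob DY {w. w \<le> z} * (\<Prod>p\<leftarrow>ps. 1 - (1 - p)^(nat \<lfloor>z\<rfloor>))"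
  using assms
proof (induction ps)
  case (Cons p ps)
  have "(\<lambda>(z', x). max z' (real x)) -` {w. w \<le> z} = {w. w \<le> z} \<times> {x. real x \<le> z}"
    by auto
  then show ?case
    unfolding max_geom_dist_Cons measure_map_pmf
    using Cons by (simp add: measure_pmf_prob_pair_times prob_geom_pmf_le mult_ac)
qed simp

lemma stoch_ge_iff_cdf_le:
  "stoch_ge A B \<longleftrightarrow>
    (\<forall>z. measure_pmf.prob A {w. w \<le> z} \<le> measure_pmf.prob B {w. w \<le> z})"
proof -
  have "measure_pmf.prob M {w. w > z} = 1 - measure_pmf.prob M {w. w \<le> z}" for M :: "real pmf" and z
  proof -
    have "{w. w > z} = UNIV - {w. w \<le> z}"
      by auto
    then show ?thesis
      using measure_pmf.prob_compl[of "{w. w \<le> z}" M] by simp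
  qed
  then show ?thesis
    unfolding stoch_ge_def by simp
qed

theorem mainTheorem4:
  fixes n :: nat and ptot :: real and DY :: "real pmf" and ps :: "real list"
  assumes "n \<ge> 1"
    and "0 < ptot" and "ptot \<le> 1"
    and "length ps = n"
    and "\<forall>p \<in> set ps. 0 < p \<and> p \<le> 1"
    and "prod_list ps = ptot"
  shows "stoch_ge (max_geom_dist DY ps) (max_geom_dist DY (replicate n (root n ptot)))"
proof -
  define q where "q = root n ptot"
  have q: "0 < q" "q \<le> 1" "q ^ n = ptot"
    using assms real_root_le_iff[of n ptot 1] by (auto simp: q_def real_root_gt_zero)
  have list_as_indexed: "prod_list (map f ps) = (\<Prod>i<n. f (ps ! i))" for f :: "real \<Rightarrow> real"
    using assms(4) by (simp add: prod.list_conv_set_nth atLeast0LessThan)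
  have "(\<Prod>i<n. 1 - (1 - ps ! i)^k) \<le> (1 - (1 - q)^k) ^ n" for k
    using prod_geom_cdf_le_homogeneous[of "{..<n}" "(!) ps" q k] assms q
    by (auto simp: list_as_indexed[of id, simplified] nth_mem lessThan_empty_iff)
  then show ?thesis
    unfolding stoch_ge_iff_cdf_le q_def[symmetric]
    using assms(5) q by (auto simp: prob_max_geom_dist_le list_as_indexed intro: mult_left_mono)
qed

end
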